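(* Let $K\ge2$, $\theta>1$, $T>0$, and let $\xi_1,\dots,\xi_K$ be $C^1$ real functions on $[T,\infty)$ satisfying, for all $t\ge T$, $$\dot\xi_1=-t^{-1}\gamma_1\big(e^{-(\xi_2-\xi_1)}-1\big)+O(t^{-\theta}),$$ $$\dot\xi_k=t^{-1}\Big(\gamma_{k-1}\big(e^{-(\xi_k-\xi_{k-1})}-1\big)-\gamma_k\big(e^{-(\xi_{k+1}-\xi_k)}-1\big)\Big)+O(t^{-\theta}),\quad 2\le k\le K-1,$$ $$\dot\xi_K=t^{-1}\gamma_{K-1}\big(e^{-(\xi_K-\xi_{K-1})}-1\big)+O(t^{-\theta}),$$ where $\gamma_k=\frac{k(K-k)}{2}$ and each $O(t^{-\theta})$ is bounded in absolute value by $Ct^{-\theta}$ for a fixed $C$. Assume moreover that $\sup_{t\ge T}|\sum_{k=1}^K\xi_k(t)|<\infty$. Then there exists $M>0$ with $|\xi_k(t)|\le M$ for all $k=1,\dots,K$ and all $t\ge T$. *)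

theory Defs
  imports "HOL-Analysis.Analysis"
begin

definition gam :: "nat \<Rightarrow> nat \<Rightarrow> real" where
  "gam K k = real k * (real K - real k) / 2"

end

theory Submission
  imports Defs
begin

text \<open>
  Put x_k = \<xi>_{k+1} - \<xi>_k and b_k = \<gamma>_k (exp(-x_k) - 1); then b_0 = b_K = 0 and the system
  reads \<xi>_k' = (b_{k-1} - b_k)/t + O(t^-\<theta>). The gap energy E = \<Sum>_k \<gamma>_k (exp(-x_k) + x_k) has
  E' = -\<Sum>_k b_k (\<xi>_{k+1}' - \<xi>_k'), which summation by parts turns into -\<Sum>_k \<xi>_k' (b_{k-1} - b_k).
  Completing the square against the equations bounds this by K C^2 t^(1-2\<theta>)/4, which is
  integrable because \<theta> > 1, so E stays bounded. As |x| \<le> exp(-x) + x and \<gamma>_k \<ge> 1/2, every gap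
  x_k is bounded, and with the bounded sum \<Sum>_k \<xi>_k this bounds every \<xi>_k.
\<close>

lemma summation_by_parts_nat:
  fixes b y :: "nat \<Rightarrow> 'a::comm_ring"
  assumes "b 0 = 0"
  shows "(\<Sum>k=1..<n. b k * (y (Suc k) - y k)) = b n * y n - (\<Sum>k=1..n. y k * (b k - b (k - 1)))"
proof (induction n)
  case 0
  then show ?case using assms by simp
next
  case (Suc n)
  show ?case
  proof (cases "n = 0")
    case True
    then show ?thesis using assms by (simp add: algebra_simps)
  next
    case False
    then have "{1..<Suc n} = insert n {1..<n}" by auto
    then show ?thesis using Suc by (simp add: algebra_simps)
  qed
qed

lemma neg_mult_le_quarter_square:
  fixes a d c :: real
  assumes "\<bar>a - d\<bar> \<le> c"
  shows "- (a * d) \<le> c\<^sup>2 / 4"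
proof -
  have "(a - d)\<^sup>2 \<le> c\<^sup>2"
    using assms by (meson abs_ge_zero abs_le_square_iff order_trans abs_ge_self)
  moreover have "- (a * d) = ((a - d)\<^sup>2 - (a + d)\<^sup>2) / 4"
    by (simp add: power2_eq_square algebra_simps)
  moreover have "0 \<le> (a + d)\<^sup>2" by simp
  ultimately show ?thesis by (smt (verit) divide_right_mono)
qed

lemma dissipation_le:
  fixes b y :: "nat \<Rightarrow> real" and n :: nat and t e :: real
  assumes "b 0 = 0" "b n = 0" "t > 0"
    and near: "\<And>k. 1 \<le> k \<Longrightarrow> k \<le> n \<Longrightarrow> \<bar>y k - (b (k - 1) - b k) / t\<bar> \<le> e"
  shows "- (\<Sum>k=1..<n. b k * (y (Suc k) - y k)) \<le> real n * t * e\<^sup>2 / 4"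
proof -
  have "- (\<Sum>k=1..<n. b k * (y (Suc k) - y k)) = (\<Sum>k=1..n. y k * (b k - b (k - 1)))"
    using summation_by_parts_nat[of b y n] assms(1,2) by simp
  also have "\<dots> = (\<Sum>k=1..n. t * - (y k * ((b (k - 1) - b k) / t)))"
    using \<open>t > 0\<close> by (intro sum.cong) (auto simp: field_simps)
  also have "\<dots> \<le> (\<Sum>k=1..n. t * (e\<^sup>2 / 4))"
    using near \<open>t > 0\<close> by (intro sum_mono mult_left_mono neg_mult_le_quarter_square) auto
  finally show ?thesis by simp
qed

lemma bounded_above_if_deriv_le_powr:
  fixes F F' :: "real \<Rightarrow> real"
  assumes "T > 0" "p > 1" "D \<ge> 0" "t \<ge> T"
    and deriv: "\<And>s. s \<ge> T \<Longrightarrow> (F has_real_derivative F' s) (at s within {T..})"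
    and le: "\<And>s. s \<ge> T \<Longrightarrow> F' s \<le> D * s powr (- p)"
  shows "F t \<le> F T + D * T powr (1 - p) / (p - 1)"
proof -
  define H where "H s = F s + D * s powr (1 - p) / (p - 1)" for s
  have dH: "(H has_real_derivative F' s - D * s powr (- p)) (at s within {T..})" if "s \<ge> T" for s
  proof -
    have "s > 0" using that \<open>T > 0\<close> by linarith
    have "((\<lambda>s. s powr (1 - p)) has_real_derivative (1 - p) * s powr (1 - p - 1)) (at s within {T..})"
      by (rule has_field_derivative_at_within[OF has_real_derivative_powr[OF \<open>s > 0\<close>]])
    then have "(H has_real_derivative F' s + D * ((1 - p) * s powr (1 - p - 1)) / (p - 1)) (at s within {T..})"
      unfolding H_def[abs_def] by (intro DERIV_add deriv[OF that] DERIV_cdivide DERIV_cmult)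
    moreover have "D * ((1 - p) * s powr (1 - p - 1)) / (p - 1) = - D * s powr (- p)"
      using \<open>p > 1\<close> by (simp add: field_simps)
    ultimately show ?thesis by simp
  qed
  have "H t \<le> H T"
  proof (rule DERIV_nonpos_imp_decreasing_open[OF \<open>t \<ge> T\<close>])
    fix s assume s: "T < s" "s < t"
    then have "at s within {T..} = at s" by (intro at_within_interior) auto
    then show "\<exists>y. (H has_real_derivative y) (at s) \<and> y \<le> 0"
      using dH[of s] le[of s] s by auto
  next
    have "continuous_on {T..} H"
      unfolding continuous_on_eq_continuous_within using dH DERIV_continuous by (metis atLeast_iff)
    then show "continuous_on {T..t} H" by (rule continuous_on_subset) auto
  qed
  moreover have "D * t powr (1 - p) / (p - 1) \<ge> 0" using assms(2,3) by simp
  ultimately show ?thesis by (simp add: H_def)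
qed

lemma abs_le_exp_minus_add: "\<bar>x\<bar> \<le> exp (- x) + (x::real)"
proof (cases "x \<ge> 0")
  case True
  then show ?thesis using exp_gt_zero[of "- x"] by simp
next
  case False
  \<comment> \<open>\<open>e\<^sup>-\<^sup>x = (e\<^sup>-\<^sup>x\<^sup>/\<^sup>2)\<^sup>2 \<ge> (1 - x/2)\<^sup>2 \<ge> -2x\<close>\<close>
  have "(1 - x / 2)\<^sup>2 \<le> (exp (- x / 2))\<^sup>2"
    using exp_ge_add_one_self[of "- x / 2"] False by (intro power_mono) auto
  moreover have "(exp (- x / 2))\<^sup>2 = exp (- x)" by (simp flip: exp_of_nat_mult)
  moreover have "(1 - x / 2)\<^sup>2 = -2 * x + (1 + x / 2)\<^sup>2" by (simp add: power2_eq_square algebra_simps)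
  ultimately show ?thesis using False by (smt (verit) zero_le_power2)
qed

lemma abs_diff_le_of_gaps:
  fixes y :: "nat \<Rightarrow> real"
  assumes gaps: "\<And>k. 1 \<le> k \<Longrightarrow> k < n \<Longrightarrow> \<bar>y (Suc k) - y k\<bar> \<le> X"
    and "1 \<le> i" "i \<le> j" "j \<le> n"
  shows "\<bar>y j - y i\<bar> \<le> real (j - i) * X"
  using \<open>i \<le> j\<close> \<open>j \<le> n\<close>
proof (induction j rule: dec_induct)
  case base
  then show ?case by simp
next
  case (step j)
  then have "\<bar>y (Suc j) - y j\<bar> \<le> X" using gaps \<open>1 \<le> i\<close> by simp
  then show ?case using step by (simp add: Suc_diff_le algebra_simps)
qed

lemma abs_le_of_gaps_and_sum:
  fixes y :: "nat \<Rightarrow> real"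
  assumes gaps: "\<And>k. 1 \<le> k \<Longrightarrow> k < n \<Longrightarrow> \<bar>y (Suc k) - y k\<bar> \<le> X"
    and sum: "\<bar>\<Sum>j=1..n. y j\<bar> \<le> S" and "0 \<le> X" and k: "1 \<le> k" "k \<le> n"
  shows "\<bar>y k\<bar> \<le> S / n + n * X"
proof -
  have pair: "\<bar>y k - y j\<bar> \<le> n * X" if "j \<in> {1..n}" for j
  proof (cases "k \<le> j")
    case True
    then have "\<bar>y j - y k\<bar> \<le> real (j - k) * X"
      using that k by (intro abs_diff_le_of_gaps[of n y X, OF gaps]) auto
    moreover have "real (j - k) * X \<le> n * X" using \<open>0 \<le> X\<close> that by (intro mult_right_mono) auto
    ultimately show ?thesis by (simp add: abs_minus_commute)
  next
    case False
    then have "\<bar>y k - y j\<bar> \<le> real (k - j) * X"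
      using that k by (intro abs_diff_le_of_gaps[of n y X, OF gaps]) auto
    moreover have "real (k - j) * X \<le> n * X" using \<open>0 \<le> X\<close> k by (intro mult_right_mono) auto
    ultimately show ?thesis by simp
  qed
  have "real n * \<bar>y k\<bar> = \<bar>(\<Sum>j=1..n. y j) + (\<Sum>j=1..n. y k - y j)\<bar>"
    by (simp add: abs_mult sum_subtractf)
  also have "\<dots> \<le> \<bar>\<Sum>j=1..n. y j\<bar> + (\<Sum>j=1..n. \<bar>y k - y j\<bar>)"
    using abs_triangle_ineq sum_abs by (rule order_trans[OF _ add_left_mono])
  also have "\<dots> \<le> S + real n * (n * X)"
    using sum sum_mono[of "{1..n}" "\<lambda>j. \<bar>y k - y j\<bar>", OF pair] by simp
  finally have "real n * \<bar>y k\<bar> \<le> S + real n * (n * X)" .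
  then show ?thesis using k by (simp add: field_simps)
qed

lemma gam_0 [simp]: "gam K 0 = 0" and gam_self [simp]: "gam K K = 0"
  by (simp_all add: gam_def)

lemma gam_nonneg: "k \<le> K \<Longrightarrow> 0 \<le> gam K k"
  by (simp add: gam_def)

lemma gam_ge_half: "1 \<le> k \<Longrightarrow> k < K \<Longrightarrow> 1 / 2 \<le> gam K k"
proof -
  assume "1 \<le> k" "k < K"
  then have "1 \<le> real k" "1 \<le> real K - real k" by auto
  then have "1 \<le> real k * (real K - real k)" by (metis mult_mono' mult_1 zero_le_one)
  then show ?thesis by (simp add: gam_def)
qed

definition flux :: "nat \<Rightarrow> (nat \<Rightarrow> real \<Rightarrow> real) \<Rightarrow> nat \<Rightarrow> real \<Rightarrow> real" where
  "flux K \<xi> k t = gam K k * (exp (- (\<xi> (Suc k) t - \<xi> k t)) - 1)"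

definition gap_energy :: "nat \<Rightarrow> (nat \<Rightarrow> real \<Rightarrow> real) \<Rightarrow> real \<Rightarrow> real" where
  "gap_energy K \<xi> t = (\<Sum>k=1..<K. gam K k * (exp (- (\<xi> (Suc k) t - \<xi> k t)) + (\<xi> (Suc k) t - \<xi> k t)))"

lemma flux_0 [simp]: "flux K \<xi> 0 t = 0" and flux_self [simp]: "flux K \<xi> K t = 0"
  by (simp_all add: flux_def)

lemma has_real_derivative_gap_energy:
  assumes "\<And>k. 1 \<le> k \<Longrightarrow> k \<le> K \<Longrightarrow> (\<xi> k has_real_derivative \<xi>' k t) (at t within S)"
  shows "(gap_energy K \<xi> has_real_derivative
            - (\<Sum>k=1..<K. flux K \<xi> k t * (\<xi>' (Suc k) t - \<xi>' k t))) (at t within S)"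
proof -
  have "((\<lambda>s. gam K k * (exp (- (\<xi> (Suc k) s - \<xi> k s)) + (\<xi> (Suc k) s - \<xi> k s))) has_real_derivative
          - (flux K \<xi> k t * (\<xi>' (Suc k) t - \<xi>' k t))) (at t within S)" if "k \<in> {1..<K}" for k
    using that unfolding flux_def
    by (auto intro!: derivative_eq_intros assms simp: algebra_simps)
  then show ?thesis
    unfolding gap_energy_def[abs_def] sum_negf[symmetric] by (rule DERIV_sum)
qed

lemma gap_le_gap_energy:
  assumes "1 \<le> k" "k < K"
  shows "\<bar>\<xi> (Suc k) t - \<xi> k t\<bar> \<le> 2 * gap_energy K \<xi> t"
proof -
  define e where "e j = exp (- (\<xi> (Suc j) t - \<xi> j t)) + (\<xi> (Suc j) t - \<xi> j t)" for j
  have bound: "\<bar>\<xi> (Suc j) t - \<xi> j t\<bar> \<le> e j" for j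
    unfolding e_def by (rule abs_le_exp_minus_add)
  then have e_nonneg: "0 \<le> e j" for j by (rule order_trans[OF abs_ge_zero])
  have "gam K k * e k \<le> gap_energy K \<xi> t"
    unfolding gap_energy_def e_def[symmetric] using assms e_nonneg
    by (intro member_le_sum mult_nonneg_nonneg gam_nonneg) auto
  moreover have "e k / 2 \<le> gam K k * e k"
    using mult_right_mono[OF gam_ge_half[OF assms] e_nonneg[of k]] by simp
  ultimately show ?thesis using bound[of k] by linarith
qed

lemma derivative_near_flux_difference:
  fixes K :: nat and \<xi> \<xi>' :: "nat \<Rightarrow> real \<Rightarrow> real"
  assumes "K \<ge> 2" "1 \<le> k" "k \<le> K"
    and eq1: "\<bar>\<xi>' 1 t - (- (1/t) * gam K 1 * (exp (- (\<xi> 2 t - \<xi> 1 t)) - 1))\<bar> \<le> r"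
    and eqk: "\<And>k. 2 \<le> k \<Longrightarrow> k \<le> K - 1 \<Longrightarrow>
       \<bar>\<xi>' k t - (1/t) * (gam K (k-1) * (exp (- (\<xi> k t - \<xi> (k-1) t)) - 1)
                        - gam K k * (exp (- (\<xi> (k+1) t - \<xi> k t)) - 1))\<bar> \<le> r"
    and eqK: "\<bar>\<xi>' K t - (1/t) * gam K (K-1) * (exp (- (\<xi> K t - \<xi> (K-1) t)) - 1)\<bar> \<le> r"
  shows "\<bar>\<xi>' k t - (flux K \<xi> (k - 1) t - flux K \<xi> k t) / t\<bar> \<le> r"
proof -
  consider "k = 1" | "k = K" | "2 \<le> k" "k \<le> K - 1" using assms(1-3) by linarith
  then show ?thesis
  proof cases
    case 1
    then show ?thesis using eq1 by (simp add: flux_def numeral_2_eq_2)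
  next
    case 2
    then have "Suc (k - 1) = k" using assms(1) by simp
    then show ?thesis using eqK 2 by (simp add: flux_def)
  next
    case 3
    then have "Suc (k - 1) = k" by simp
    then show ?thesis using eqk[OF 3] by (simp add: flux_def diff_divide_distrib)
  qed
qed

theorem mainTheorem13:
  fixes K :: nat and \<theta> T C :: real
    and \<xi> \<xi>' :: "nat \<Rightarrow> real \<Rightarrow> real"
  assumes K2: "K \<ge> 2" and th: "\<theta> > 1" and Tpos: "T > 0"
    and deriv: "\<And>k t. 1 \<le> k \<Longrightarrow> k \<le> K \<Longrightarrow> t \<ge> T \<Longrightarrow>
                  (\<xi> k has_real_derivative \<xi>' k t) (at t within {T..})"
    and contderiv: "\<And>k. 1 \<le> k \<Longrightarrow> k \<le> K \<Longrightarrow> continuous_on {T..} (\<xi>' k)"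
    and eq1: "\<And>t. t \<ge> T \<Longrightarrow>
       \<bar>\<xi>' 1 t - (- (1/t) * gam K 1 * (exp (- (\<xi> 2 t - \<xi> 1 t)) - 1))\<bar> \<le> C * t powr (-\<theta>)"
    and eqk: "\<And>k t. 2 \<le> k \<Longrightarrow> k \<le> K - 1 \<Longrightarrow> t \<ge> T \<Longrightarrow>
       \<bar>\<xi>' k t - (1/t) * (gam K (k-1) * (exp (- (\<xi> k t - \<xi> (k-1) t)) - 1)
                        - gam K k * (exp (- (\<xi> (k+1) t - \<xi> k t)) - 1))\<bar> \<le> C * t powr (-\<theta>)"
    and eqK: "\<And>t. t \<ge> T \<Longrightarrow>
       \<bar>\<xi>' K t - (1/t) * gam K (K-1) * (exp (- (\<xi> K t - \<xi> (K-1) t)) - 1)\<bar> \<le> C * t powr (-\<theta>)"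
    and sumbdd: "bdd_above ((\<lambda>t. \<bar>\<Sum>k=1..K. \<xi> k t\<bar>) ` {T..})"
  shows "\<exists>M>0. \<forall>k\<in>{1..K}. \<forall>t\<ge>T. \<bar>\<xi> k t\<bar> \<le> M"
proof -
  define D where "D = real K * C\<^sup>2 / 4"
  define E' where "E' t = - (\<Sum>k=1..<K. flux K \<xi> k t * (\<xi>' (Suc k) t - \<xi>' k t))" for t
  have dissipation: "E' t \<le> D * t powr (- (2 * \<theta> - 1))" if t: "t \<ge> T" for t
  proof -
    have "t > 0" using t Tpos by linarith
    have "E' t \<le> real K * t * (C * t powr (- \<theta>))\<^sup>2 / 4"
      unfolding E'_def using \<open>t > 0\<close> eq1[OF t] eqk[OF _ _ t] eqK[OF t] K2
      by (intro dissipation_le derivative_near_flux_difference) auto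
    also have "\<dots> = D * (t powr 1 * t powr (- \<theta>) * t powr (- \<theta>))"
      using \<open>t > 0\<close> by (simp add: D_def power2_eq_square)
    also have "\<dots> = D * t powr (1 + - \<theta> + - \<theta>)" by (simp only: powr_add)
    finally show ?thesis by (simp add: algebra_simps)
  qed
  have dE: "(gap_energy K \<xi> has_real_derivative E' t) (at t within {T..})" if "t \<ge> T" for t
    unfolding E'_def using deriv that by (intro has_real_derivative_gap_energy) auto
  define B where "B = gap_energy K \<xi> T + D * T powr (1 - (2 * \<theta> - 1)) / (2 * \<theta> - 1 - 1)"
  have energy_bounded: "gap_energy K \<xi> t \<le> B" if "t \<ge> T" for t
    unfolding B_def using Tpos th that
    by (intro bounded_above_if_deriv_le_powr[OF _ _ _ _ dE dissipation]) (auto simp: D_def)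
  have gaps: "\<bar>\<xi> (Suc k) t - \<xi> k t\<bar> \<le> 2 * B" if "1 \<le> k" "k < K" "t \<ge> T" for k t
    using gap_le_gap_energy[OF that(1,2), of \<xi> t] energy_bounded[OF that(3)] by linarith
  obtain S where S: "\<And>t. t \<ge> T \<Longrightarrow> \<bar>\<Sum>k=1..K. \<xi> k t\<bar> \<le> S"
    using sumbdd by (auto simp: bdd_above_def)
  have "0 \<le> 2 * B" using gaps[of 1 T] K2 by (auto intro: order_trans[OF abs_ge_zero])
  have "\<bar>\<xi> k t\<bar> \<le> S / K + K * (2 * B)" if "k \<in> {1..K}" "t \<ge> T" for k t
    using gaps[OF _ _ \<open>t \<ge> T\<close>] S[OF \<open>t \<ge> T\<close>] \<open>0 \<le> 2 * B\<close> that(1)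
    by (intro abs_le_of_gaps_and_sum[where y = "\<lambda>j. \<xi> j t"]) auto
  then show ?thesis by (intro exI[of _ "max 1 (S / K + K * (2 * B))"]) force
qed

end
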